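(* Let $S$ be a monoid, $A_S$ a Rees artinian (in particular, an artinian) right $S$-act, and $f\in\mathrm{End}(A_S)$. Then there is $n\in\mathbb N$ with $\ker f^n\vee\mathcal K_{\mathrm{Im} f^n}=\nabla_A$. Moreover, $f$ is an automorphism if and only if $f$ is injective.
   Context: $\ker h=\{(a,a'):h(a)=h(a')\}$; for a subact $B\subseteq A$, $\mathcal K_B=(B\times B)\cup\Delta_A$ where $\Delta_A=\{(a,a):a\in A\}$; $\nabla_A=A\times A$; $\vee$ is the join in the lattice of congruences on $A_S$. Rees artinian means the descending chain condition on subacts; artinian means the descending chain condition on congruences. *)

theory Defs
  imports Main
begin

definition right_act :: "'b set \<Rightarrow> ('b \<Rightarrow> 'a::monoid_mult \<Rightarrow> 'b) \<Rightarrow> bool" where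
  "right_act A act \<longleftrightarrow>
     (\<forall>a\<in>A. \<forall>s. act a s \<in> A) \<and> (\<forall>a\<in>A. act a 1 = a) \<and>
     (\<forall>a\<in>A. \<forall>s t. act (act a s) t = act a (s * t))"

definition subact :: "'b set \<Rightarrow> ('b \<Rightarrow> 'a::monoid_mult \<Rightarrow> 'b) \<Rightarrow> 'b set \<Rightarrow> bool" where
  "subact A act B \<longleftrightarrow> B \<subseteq> A \<and> (\<forall>b\<in>B. \<forall>s. act b s \<in> B)"

definition rees_artinian :: "'b set \<Rightarrow> ('b \<Rightarrow> 'a::monoid_mult \<Rightarrow> 'b) \<Rightarrow> bool" where
  "rees_artinian A act \<longleftrightarrow>
     (\<forall>C :: nat \<Rightarrow> 'b set. (\<forall>n. subact A act (C n)) \<and> (\<forall>n. C (Suc n) \<subseteq> C n)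
        \<longrightarrow> (\<exists>m. \<forall>n\<ge>m. C n = C m))"

definition act_endo :: "'b set \<Rightarrow> ('b \<Rightarrow> 'a::monoid_mult \<Rightarrow> 'b) \<Rightarrow> ('b \<Rightarrow> 'b) \<Rightarrow> bool" where
  "act_endo A act f \<longleftrightarrow> (\<forall>a\<in>A. f a \<in> A) \<and> (\<forall>a\<in>A. \<forall>s. f (act a s) = act (f a) s)"

definition act_auto :: "'b set \<Rightarrow> ('b \<Rightarrow> 'a::monoid_mult \<Rightarrow> 'b) \<Rightarrow> ('b \<Rightarrow> 'b) \<Rightarrow> bool" where
  "act_auto A act f \<longleftrightarrow> act_endo A act f \<and> bij_betw f A A"

definition act_congruence :: "'b set \<Rightarrow> ('b \<Rightarrow> 'a::monoid_mult \<Rightarrow> 'b) \<Rightarrow> 'b rel \<Rightarrow> bool" where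
  "act_congruence A act \<rho> \<longleftrightarrow> equiv A \<rho> \<and> (\<forall>(a,b)\<in>\<rho>. \<forall>s. (act a s, act b s) \<in> \<rho>)"

definition cong_join :: "'b set \<Rightarrow> ('b \<Rightarrow> 'a::monoid_mult \<Rightarrow> 'b) \<Rightarrow> 'b rel \<Rightarrow> 'b rel \<Rightarrow> 'b rel" where
  "cong_join A act \<rho> \<sigma> = \<Inter>{\<theta>. act_congruence A act \<theta> \<and> \<rho> \<union> \<sigma> \<subseteq> \<theta>}"

definition ker_on :: "'b set \<Rightarrow> ('b \<Rightarrow> 'c) \<Rightarrow> 'b rel" where
  "ker_on A h = {(a, a'). a \<in> A \<and> a' \<in> A \<and> h a = h a'}"

definition rees_cong :: "'b set \<Rightarrow> 'b set \<Rightarrow> 'b rel" where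
  "rees_cong A B = (B \<times> B) \<union> Id_on A"

end

theory Submission
  imports Defs
begin

text \<open>The images of the powers of \<open>f\<close> form a descending chain of subacts, so by the
  Rees artinian condition some power \<open>g = f\<^sup>n\<close> (\<open>n \<ge> 1\<close>) satisfies \<open>g(g(A)) = g(A)\<close>.
  Then every \<open>a \<in> A\<close> is \<open>ker g\<close>-related to some element of \<open>g(A)\<close>, and any two elements
  of \<open>g(A)\<close> are related by the Rees congruence, so the join is \<open>\<nabla>\<^sub>A\<close>. If \<open>f\<close> is injective,
  so is \<open>g\<close>, and \<open>g(g(A)) = g(A)\<close> forces \<open>g(A) = A\<close>, whence \<open>f\<close> is surjective.\<close>

lemma act_endo_funpow:
  assumes "act_endo A act f"
  shows "act_endo A act (f ^^ n)"
  using assms by (induction n) (auto simp: act_endo_def)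

lemma act_endo_image_subset: "act_endo A act g \<Longrightarrow> g ` A \<subseteq> A"
  by (auto simp: act_endo_def)

lemma subact_endo_image:
  assumes "right_act A act" and "act_endo A act g"
  shows "subact A act (g ` A)"
proof -
  have "act (g a) s \<in> g ` A" if "a \<in> A" for a s
  proof -
    have "act (g a) s = g (act a s)" using assms(2) that by (simp add: act_endo_def)
    moreover have "act a s \<in> A" using assms(1) that by (simp add: right_act_def)
    ultimately show ?thesis by blast
  qed
  then show ?thesis using act_endo_image_subset[OF assms(2)] by (auto simp: subact_def)
qed

lemma funpow_image_subset:
  assumes "f ` A \<subseteq> A"
  shows "(f ^^ n) ` A \<subseteq> A"
  using assms by (induction n) (auto simp: image_subset_iff)

lemma funpow_Suc_image_subset:
  assumes "f ` A \<subseteq> A"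
  shows "(f ^^ Suc n) ` A \<subseteq> (f ^^ n) ` A"
  using assms by (auto simp: funpow_Suc_right image_comp[symmetric] simp del: funpow.simps)

lemma rees_artinian_funpow_image_stable:
  assumes "right_act A act" and "rees_artinian A act" and "act_endo A act f"
  obtains n where "n \<ge> 1" and "(f ^^ n) ` (f ^^ n) ` A = (f ^^ n) ` A"
proof -
  have "subact A act ((f ^^ n) ` A)" for n
    by (rule subact_endo_image[OF assms(1) act_endo_funpow[OF assms(3)]])
  moreover have "(f ^^ Suc n) ` A \<subseteq> (f ^^ n) ` A" for n
    by (rule funpow_Suc_image_subset[OF act_endo_image_subset[OF assms(3)]])
  ultimately have "\<exists>m. \<forall>n\<ge>m. (f ^^ n) ` A = (f ^^ m) ` A"
    using assms(2)[unfolded rees_artinian_def, rule_format, of "\<lambda>n. (f ^^ n) ` A"] by blast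
  then obtain m where m: "\<And>n. n \<ge> m \<Longrightarrow> (f ^^ n) ` A = (f ^^ m) ` A" by blast
  let ?n = "Suc m"
  have "(f ^^ ?n) ` (f ^^ ?n) ` A = (f ^^ (?n + ?n)) ` A"
    by (simp only: funpow_add image_comp)
  also have "\<dots> = (f ^^ ?n) ` A" using m[of "?n + ?n"] m[of ?n] by simp
  finally show ?thesis using that[of ?n] by simp
qed

lemma act_congruence_full:
  assumes "right_act A act"
  shows "act_congruence A act (A \<times> A)"
  using assms unfolding act_congruence_def right_act_def equiv_def refl_on_def sym_def trans_def
  by auto

lemma cong_join_ker_rees_full:
  assumes "right_act A act" and "g ` A \<subseteq> A" and stable: "g ` g ` A = g ` A"
  shows "cong_join A act (ker_on A g) (rees_cong A (g ` A)) = A \<times> A"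
proof
  have "ker_on A g \<union> rees_cong A (g ` A) \<subseteq> A \<times> A"
    using assms(2) by (auto simp: ker_on_def rees_cong_def)
  then show "cong_join A act (ker_on A g) (rees_cong A (g ` A)) \<subseteq> A \<times> A"
    using act_congruence_full[OF assms(1)] unfolding cong_join_def by blast
next
  show "A \<times> A \<subseteq> cong_join A act (ker_on A g) (rees_cong A (g ` A))"
    unfolding cong_join_def
  proof (intro subsetI InterI, clarify)
    fix a a' \<theta>
    assume a: "a \<in> A" "a' \<in> A" and "act_congruence A act \<theta>"
      and sub: "ker_on A g \<union> rees_cong A (g ` A) \<subseteq> \<theta>"
    then have "equiv A \<theta>" by (simp add: act_congruence_def)
    have to_image: "\<exists>b\<in>g ` A. (x, b) \<in> \<theta>" if "x \<in> A" for x
    proof -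
      obtain b where "b \<in> g ` A" "g x = g b" using stable \<open>x \<in> A\<close> by (metis imageE imageI)
      then show ?thesis using sub \<open>x \<in> A\<close> assms(2) by (auto simp: ker_on_def)
    qed
    obtain b where b: "b \<in> g ` A" "(a, b) \<in> \<theta>" using to_image a(1) by blast
    obtain b' where b': "b' \<in> g ` A" "(a', b') \<in> \<theta>" using to_image a(2) by blast
    have "(b, b') \<in> \<theta>" using sub b(1) b'(1) unfolding rees_cong_def by blast
    moreover have "(b', a') \<in> \<theta>" using \<open>equiv A \<theta>\<close> b'(2) by (blast dest: equivE symD)
    ultimately show "(a, a') \<in> \<theta>" using \<open>equiv A \<theta>\<close> b(2) by (blast dest: equivE transD)
  qed
qed

lemma inj_on_image_stable_imp_surj:
  assumes "inj_on g A" and "g ` A \<subseteq> A" and "g ` g ` A = g ` A"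
  shows "g ` A = A"
  using inj_on_image_eq_iff[OF assms(1) assms(2) subset_refl] assms(3) by simp

lemma inj_on_funpow:
  assumes "inj_on f A" and "f ` A \<subseteq> A"
  shows "inj_on (f ^^ n) A"
proof (induction n)
  case (Suc n)
  show ?case
    unfolding funpow.simps
    by (rule comp_inj_on[OF Suc.IH inj_on_subset[OF assms(1) funpow_image_subset[OF assms(2)]]])
qed simp

lemma funpow_surj_imp_surj:
  assumes "f ` A \<subseteq> A" and "n \<ge> 1" and "(f ^^ n) ` A = A"
  shows "f ` A = A"
proof -
  obtain k where "n = Suc k" using assms(2) by (cases n) auto
  then have "A \<subseteq> f ` (f ^^ k) ` A" using assms(3) by (simp add: image_comp)
  also have "\<dots> \<subseteq> f ` A"
    using funpow_image_subset[OF assms(1)] by (rule image_mono)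
  finally show ?thesis using assms(1) by blast
qed

theorem mainTheorem10:
  fixes A :: "'b set" and act :: "'b \<Rightarrow> 'a::monoid_mult \<Rightarrow> 'b" and f :: "'b \<Rightarrow> 'b"
  assumes "right_act A act"
    and "rees_artinian A act"
    and "act_endo A act f"
  shows "(\<exists>n::nat. n \<ge> 1 \<and>
            cong_join A act (ker_on A (f ^^ n)) (rees_cong A ((f ^^ n) ` A)) = A \<times> A)
         \<and> (act_auto A act f \<longleftrightarrow> inj_on f A)"
proof -
  obtain n where n: "n \<ge> 1" and stable: "(f ^^ n) ` (f ^^ n) ` A = (f ^^ n) ` A"
    using rees_artinian_funpow_image_stable[OF assms] .
  have image_n: "(f ^^ n) ` A \<subseteq> A"
    using act_endo_image_subset[OF act_endo_funpow[OF assms(3)]] .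
  have "f ` A = A" if "inj_on f A"
    using inj_on_image_stable_imp_surj[OF inj_on_funpow[OF that] image_n stable]
      funpow_surj_imp_surj[OF _ n] act_endo_image_subset[OF assms(3)] by blast
  then show ?thesis
    using cong_join_ker_rees_full[OF assms(1) image_n stable] n assms(3)
    by (auto simp: act_auto_def bij_betw_def)
qed

end
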